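(* Suppose the system is i-IOSS with $\mathcal{KL}$ function $\alpha$. Let $\delta_0>0$ and let $\underline{\rho}\in\mathcal{KL}$ satisfy $\underline{\rho}(|\tilde{\pi}_i|,\tau)\ge\alpha(2|\tilde{\pi}_i|,\tau)$ for all $\tilde{\boldsymbol{\pi}}_{0:2t}\in\Pi_{\delta_0}$, $i\in\mathbb{I}_{0:2t}$, $\tau\in\mathbb{I}_{0:t}$ and $t\ge0$ (such $\underline{\rho}$ always exists). Then the FIE cost function $$V_t(\tilde{\boldsymbol{\pi}}_{0:2t}):=\max_{i\in\mathbb{I}_{0:2t}}\underline{\rho}(|\tilde{\pi}_i|,t-\iota(\tilde{\pi}_i)-1)$$ satisfies the following two conditions on $\Pi_{\delta_0}$: (A2) there exist $\underline{\rho}',\rho\in\mathcal{KL}$ with $\max_i\underline{\rho}'(|\tilde{\pi}_i|,t-\iota(\tilde{\pi}_i)-1)\le V_t(\tilde{\boldsymbol{\pi}}_{0:2t})\le\max_i\rho(|\tilde{\pi}_i|,t-\iota(\tilde{\pi}_i)-1)$ for all $\tilde{\boldsymbol{\pi}}_{0:2t}\in\Pi_{\delta_0}$, $t\ge0$; and (A3) for these $\underline{\rho}',\rho$ there is $\bar{\alpha}\in\mathcal{KL}$ with $\alpha(2\underline{\rho}'^{-1}(\rho(|\tilde{\pi}_i|,\tau),\tau'),\tau')\le\bar{\alpha}(|\tilde{\pi}_i|,\tau)$ for all $\tilde{\boldsymbol{\pi}}_{0:2t}\in\Pi_{\delta_0}$, $i$, and $\tau,\tau'\in\mathbb{I}_{0:t}$.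 The same holds with $\Pi$ in place of $\Pi_{\delta_0}$ (global case) when the inequality on $\underline{\rho}$ holds on $\Pi$. In either case, if the system is exp-i-IOSS, then $\underline{\rho}$ can be taken of the form $\underline{\rho}(s,\tau)=csb^\tau$ with some $c>0$, $b\in(0,1)$, for all $\tau\ge0$ and $s$ in the applicable domain.
   Context: System $x_{t+1}=f(x_t,w_t)$, $y_t=h(x_t)+v_t$, $x_t\in\mathbb{X}\subseteq\mathbb{R}^n$, $w_t\in\mathbb{W}\subseteq\mathbb{R}^g$, $v_t\in\mathbb{V}\subseteq\mathbb{R}^p$, $f,h$ continuous; $\bar{x}_0$ prior estimate of $x_0$. $\mathcal{KL}$ functions as usual; $\underline{\rho}'^{-1}(\cdot,\tau)$ denotes the inverse of $\underline{\rho}'(\cdot,\tau)$ in its first argument. i-IOSS: there is $\alpha\in\mathcal{KL}$ such that for any two initial states $x^{(1)}_0,x^{(2)}_0$ and disturbance sequences $\boldsymbol{w}^{(1)}_{0:t-1},\boldsymbol{w}^{(2)}_{0:t-1}$, $|x^{(1)}_t-x^{(2)}_t|\le\max_{i\in\mathbb{I}_{0:2t}}\alpha(|\pi_i|,t-\iota(\pi_i)-1)$ for all $t$, where $\pi_0:=x^{(1)}_0-x^{(2)}_0$, $\pi_{\tau+1}:=w^{(1)}_\tau-w^{(2)}_\tau$, $\pi_{\tau+t+1}:=h(x^{(2)}_\tau)-h(x^{(1)}_\tau)$ ($\tau\in\mathbb{I}_{0:t-1}$), with $\iota(\pi_0)=-1$, $\iota(\pi_{\tau+1})=\iota(\pi_{\tau+t+1})=\tau$;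 exp-i-IOSS if $\alpha(s,\tau)=cs\lambda^\tau$, $c>0$, $\lambda\in(0,1)$. FIE decision variables $\chi_0\in\mathbb{X}$, $\omega_{0:t-1}\in\mathbb{W}^t$, $\nu_{0:t-1}\in\mathbb{V}^t$ are collected as $\tilde{\pi}_0:=\chi_0-\bar{x}_0$, $\tilde{\pi}_{\tau+1}:=\omega_\tau$, $\tilde{\pi}_{\tau+t+1}:=\nu_\tau$ with the same time indices $\iota$; $\Pi$ is the set of such sequences with $\chi_0,\bar{x}_0\in\mathbb{X}$ and $\Pi_{\delta_0}$ those with $|\chi_0-\bar{x}_0|\le\delta_0$. The FIE at time $t$ minimizes $V_t(\tilde{\boldsymbol{\pi}}_{0:2t})$ subject to $\chi_{\tau+1}=f(\chi_\tau,\omega_\tau)$, $y_\tau=h(\chi_\tau)+\nu_\tau$. *)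

theory Defs
  imports "HOL-Analysis.Analysis"
begin

definition classK :: "(real \<Rightarrow> real) \<Rightarrow> bool" where
  "classK g \<longleftrightarrow> continuous_on {0..} g \<and> g 0 = 0 \<and> strict_mono_on {0..} g"

definition classL :: "(nat \<Rightarrow> real) \<Rightarrow> bool" where
  "classL \<phi> \<longleftrightarrow> antimono \<phi> \<and> \<phi> \<longlonglongrightarrow> 0"

definition KL :: "(real \<Rightarrow> nat \<Rightarrow> real) \<Rightarrow> bool" where
  "KL \<beta> \<longleftrightarrow> (\<forall>\<tau>. classK (\<lambda>s. \<beta> s \<tau>)) \<and> (\<forall>s\<ge>0. classL (\<lambda>\<tau>. \<beta> s \<tau>))"

definition KLinv :: "(real \<Rightarrow> nat \<Rightarrow> real) \<Rightarrow> nat \<Rightarrow> real \<Rightarrow> real" where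
  "KLinv \<beta> \<tau> y = (THE r. 0 \<le> r \<and> \<beta> r \<tau> = y)"

text \<open>A sequence pi_{0:2t} is represented as a triple (pi_0, (pi_{tau+1})_tau, (pi_{tau+t+1})_tau).\<close>

definition seqnorm :: "nat \<Rightarrow> ('a::real_normed_vector \<times> (nat \<Rightarrow> 'b::real_normed_vector) \<times> (nat \<Rightarrow> 'c::real_normed_vector)) \<Rightarrow> nat \<Rightarrow> real" where
  "seqnorm t p i = (case p of (p0, pw, pv) \<Rightarrow>
     if i = 0 then norm p0 else if i \<le> t then norm (pw (i - 1)) else norm (pv (i - t - 1)))"

definition iota :: "nat \<Rightarrow> nat \<Rightarrow> int" where
  "iota t i = (if i = 0 then -1 else if i \<le> t then int i - 1 else int i - int t - 1)"

definition age :: "nat \<Rightarrow> nat \<Rightarrow> nat" where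
  "age t i = nat (int t - iota t i - 1)"

definition maxterm :: "(real \<Rightarrow> nat \<Rightarrow> real) \<Rightarrow> nat \<Rightarrow> ('a::real_normed_vector \<times> (nat \<Rightarrow> 'b::real_normed_vector) \<times> (nat \<Rightarrow> 'c::real_normed_vector)) \<Rightarrow> real" where
  "maxterm \<beta> t p = Max ((\<lambda>i. \<beta> (seqnorm t p i) (age t i)) ` {0..2*t})"

fun traj :: "('x \<Rightarrow> 'w \<Rightarrow> 'x) \<Rightarrow> 'x \<Rightarrow> (nat \<Rightarrow> 'w) \<Rightarrow> nat \<Rightarrow> 'x" where
  "traj f x0 w 0 = x0"
| "traj f x0 w (Suc t) = f (traj f x0 w t) (w t)"

definition iIOSS :: "'x::real_normed_vector set \<Rightarrow> 'w::real_normed_vector set \<Rightarrow> ('x \<Rightarrow> 'w \<Rightarrow> 'x)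
    \<Rightarrow> ('x \<Rightarrow> 'y::real_normed_vector) \<Rightarrow> (real \<Rightarrow> nat \<Rightarrow> real) \<Rightarrow> bool" where
  "iIOSS X W f h \<alpha> \<longleftrightarrow> KL \<alpha> \<and>
     (\<forall>x1 x2 w1 w2 t. x1 \<in> X \<longrightarrow> x2 \<in> X \<longrightarrow> (\<forall>\<tau><t. w1 \<tau> \<in> W \<and> w2 \<tau> \<in> W) \<longrightarrow>
        norm (traj f x1 w1 t - traj f x2 w2 t)
          \<le> maxterm \<alpha> t (x1 - x2, (\<lambda>\<tau>. w1 \<tau> - w2 \<tau>),
                           (\<lambda>\<tau>. h (traj f x2 w2 \<tau>) - h (traj f x1 w1 \<tau>))))"

definition exp_iIOSS where
  "exp_iIOSS X W f h \<longleftrightarrow> (\<exists>c lam. c > 0 \<and> 0 < lam \<and> lam < 1 \<and> iIOSS X W f h (\<lambda>s \<tau>. c * s * lam ^ \<tau>))"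

definition Pi_set :: "'x::real_normed_vector set \<Rightarrow> 'w set \<Rightarrow> 'y set \<Rightarrow> nat \<Rightarrow> ('x \<times> (nat \<Rightarrow> 'w) \<times> (nat \<Rightarrow> 'y)) set" where
  "Pi_set X W V t = {(p0, pw, pv). (\<exists>\<chi>0 xbar0. \<chi>0 \<in> X \<and> xbar0 \<in> X \<and> p0 = \<chi>0 - xbar0)
      \<and> (\<forall>\<tau><t. pw \<tau> \<in> W) \<and> (\<forall>\<tau><t. pv \<tau> \<in> V)}"

definition Pi_delta :: "'x::real_normed_vector set \<Rightarrow> 'w set \<Rightarrow> 'y set \<Rightarrow> real \<Rightarrow> nat \<Rightarrow> ('x \<times> (nat \<Rightarrow> 'w) \<times> (nat \<Rightarrow> 'y)) set" where
  "Pi_delta X W V \<delta>0 t = {p \<in> Pi_set X W V t. norm (fst p) \<le> \<delta>0}"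

definition FIE_cost :: "(real \<Rightarrow> nat \<Rightarrow> real) \<Rightarrow> nat \<Rightarrow> ('a::real_normed_vector \<times> (nat \<Rightarrow> 'b::real_normed_vector) \<times> (nat \<Rightarrow> 'c::real_normed_vector)) \<Rightarrow> real" where
  "FIE_cost \<rho> t p = maxterm \<rho> t p"

definition rho_hyp :: "(real \<Rightarrow> nat \<Rightarrow> real) \<Rightarrow> (real \<Rightarrow> nat \<Rightarrow> real) \<Rightarrow> (nat \<Rightarrow> ('a::real_normed_vector \<times> (nat \<Rightarrow> 'b::real_normed_vector) \<times> (nat \<Rightarrow> 'c::real_normed_vector)) set) \<Rightarrow> bool" where
  "rho_hyp \<alpha> \<rho> P \<longleftrightarrow> (\<forall>t. \<forall>p \<in> P t. \<forall>i \<in> {0..2*t}. \<forall>\<tau> \<le> t.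
       \<alpha> (2 * seqnorm t p i) \<tau> \<le> \<rho> (seqnorm t p i) \<tau>)"

definition cond_A2 where
  "cond_A2 Vc P \<rho>' \<rho> \<longleftrightarrow> (\<forall>t. \<forall>p \<in> P t. maxterm \<rho>' t p \<le> Vc t p \<and> Vc t p \<le> maxterm \<rho> t p)"

text \<open>Condition (A3); the inverse is used only where it is defined (value in the range).\<close>
definition cond_A3 :: "(real \<Rightarrow> nat \<Rightarrow> real) \<Rightarrow> (nat \<Rightarrow> ('a::real_normed_vector \<times> (nat \<Rightarrow> 'b::real_normed_vector) \<times> (nat \<Rightarrow> 'c::real_normed_vector)) set) \<Rightarrow> (real \<Rightarrow> nat \<Rightarrow> real) \<Rightarrow> (real \<Rightarrow> nat \<Rightarrow> real) \<Rightarrow> bool" where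
  "cond_A3 \<alpha> P \<rho>' \<rho> \<longleftrightarrow> (\<exists>\<alpha>bar. KL \<alpha>bar \<and>
     (\<forall>t. \<forall>p \<in> P t. \<forall>i \<in> {0..2*t}. \<forall>\<tau> \<le> t. \<forall>\<tau>' \<le> t.
        \<rho> (seqnorm t p i) \<tau> \<in> (\<lambda>r. \<rho>' r \<tau>') ` {0..} \<longrightarrow>
        \<alpha> (2 * KLinv \<rho>' \<tau>' (\<rho> (seqnorm t p i) \<tau>)) \<tau>' \<le> \<alpha>bar (seqnorm t p i) \<tau>))"

definition A2_A3 where
  "A2_A3 \<alpha> Vc P \<longleftrightarrow> (\<exists>\<rho>' \<rho>. KL \<rho>' \<and> KL \<rho> \<and> cond_A2 Vc P \<rho>' \<rho> \<and> cond_A3 \<alpha> P \<rho>' \<rho>)"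

end

theory Submission
  imports Defs
begin

text \<open>
  Enlarge \<open>\<rho>l\<close> to \<open>\<rho>(s,\<tau>) = max (\<rho>l(s,\<tau>)) (\<alpha>(2s,\<tau>))\<close>, which is again of class KL.
  Since the hypothesis on \<open>\<rho>l\<close> covers every age \<open>\<tau> \<le> t\<close>, the function \<open>\<rho>\<close> agrees with
  \<open>\<rho>l\<close> on all admissible sequences, so (A2) holds with equality for \<open>\<rho>' = \<rho>\<close>. With this
  choice the inverse in (A3) cancels: if \<open>\<rho>(r,\<tau>') = \<rho>(s,\<tau>)\<close> then
  \<open>\<alpha>(2r,\<tau>') \<le> \<rho>(r,\<tau>') = \<rho>(s,\<tau>)\<close>, so \<open>\<alpha>bar = \<rho>\<close> works. A function \<open>\<rho>l\<close> with the
  required property is \<open>\<alpha>(2s,\<tau>)\<close> itself, which for \<open>\<alpha>(s,\<tau>) = c s \<lambda>\<^sup>\<tau>\<close> is \<open>2c s \<lambda>\<^sup>\<tau>\<close>.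
\<close>

lemma KL_scale_arg:
  assumes "KL \<beta>" and "c > 0"
  shows "KL (\<lambda>s \<tau>. \<beta> (c * s) \<tau>)"
proof -
  have "classK (\<lambda>s. \<beta> (c * s) \<tau>)" for \<tau>
  proof -
    have cont: "continuous_on {0..} (\<lambda>s. \<beta> s \<tau>)" and zero: "\<beta> 0 \<tau> = 0"
      and mono: "strict_mono_on {0..} (\<lambda>s. \<beta> s \<tau>)"
      using assms(1) unfolding KL_def classK_def by auto
    have "continuous_on {0..} (\<lambda>s. \<beta> (c * s) \<tau>)"
      by (rule continuous_on_compose2[OF cont]) (use assms(2) in \<open>auto intro!: continuous_intros\<close>)
    moreover have "strict_mono_on {0..} (\<lambda>s. \<beta> (c * s) \<tau>)"
      using mono assms(2) unfolding strict_mono_on_def by auto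
    ultimately show ?thesis using zero unfolding classK_def by auto
  qed
  moreover have "\<forall>s\<ge>0. classL (\<lambda>\<tau>. \<beta> (c * s) \<tau>)"
    using assms unfolding KL_def by auto
  ultimately show ?thesis unfolding KL_def by auto
qed

lemma KL_max:
  assumes "KL \<beta>" and "KL \<gamma>"
  shows "KL (\<lambda>s \<tau>. max (\<beta> s \<tau>) (\<gamma> s \<tau>))"
proof -
  have "classK (\<lambda>s. max (\<beta> s \<tau>) (\<gamma> s \<tau>))" for \<tau>
  proof -
    have "continuous_on {0..} (\<lambda>s. \<beta> s \<tau>)" "\<beta> 0 \<tau> = 0"
      and mono_\<beta>: "strict_mono_on {0..} (\<lambda>s. \<beta> s \<tau>)"
      and "continuous_on {0..} (\<lambda>s. \<gamma> s \<tau>)" "\<gamma> 0 \<tau> = 0"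
      and mono_\<gamma>: "strict_mono_on {0..} (\<lambda>s. \<gamma> s \<tau>)"
      using assms unfolding KL_def classK_def by auto
    moreover have "strict_mono_on {0..} (\<lambda>s. max (\<beta> s \<tau>) (\<gamma> s \<tau>))"
    proof (rule strict_mono_onI)
      fix r s :: real assume "r \<in> {0..}" "s \<in> {0..}" "r < s"
      then have "\<beta> r \<tau> < \<beta> s \<tau>" "\<gamma> r \<tau> < \<gamma> s \<tau>"
        using mono_\<beta> mono_\<gamma> unfolding strict_mono_on_def by auto
      then show "max (\<beta> r \<tau>) (\<gamma> r \<tau>) < max (\<beta> s \<tau>) (\<gamma> s \<tau>)" by auto
    qed
    ultimately show ?thesis unfolding classK_def by (auto intro: continuous_on_max)
  qed
  moreover have "classL (\<lambda>\<tau>. max (\<beta> s \<tau>) (\<gamma> s \<tau>))" if "s \<ge> 0" for s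
  proof -
    have "antimono (\<lambda>\<tau>. \<beta> s \<tau>)" "(\<lambda>\<tau>. \<beta> s \<tau>) \<longlonglongrightarrow> 0"
      "antimono (\<lambda>\<tau>. \<gamma> s \<tau>)" "(\<lambda>\<tau>. \<gamma> s \<tau>) \<longlonglongrightarrow> 0"
      using assms that unfolding KL_def classL_def by auto
    then show ?thesis
      unfolding classL_def antimono_def
      using tendsto_max[of "\<lambda>\<tau>. \<beta> s \<tau>" 0 sequentially "\<lambda>\<tau>. \<gamma> s \<tau>" 0]
      by (auto intro: max.coboundedI1 max.coboundedI2)
  qed
  ultimately show ?thesis unfolding KL_def by auto
qed

lemma KL_linear_exponential:
  assumes "c > 0" and "0 < b" and "b < 1"
  shows "KL (\<lambda>s \<tau>. c * s * b ^ \<tau>)"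
proof -
  have "classK (\<lambda>s. c * s * b ^ \<tau>)" for \<tau>
    unfolding classK_def strict_mono_on_def using assms by (auto intro!: continuous_intros)
  moreover have "classL (\<lambda>\<tau>. c * s * b ^ \<tau>)" if "s \<ge> 0" for s
  proof -
    have "antimono (\<lambda>\<tau>. c * s * b ^ \<tau>)"
      unfolding antimono_def using assms that by (auto intro!: mult_left_mono power_decreasing)
    moreover have "(\<lambda>\<tau>. c * s * b ^ \<tau>) \<longlonglongrightarrow> c * s * 0"
      using assms by (intro tendsto_mult tendsto_const LIMSEQ_power_zero) auto
    ultimately show ?thesis unfolding classL_def by simp
  qed
  ultimately show ?thesis unfolding KL_def by auto
qed

lemma KLinv_apply:
  assumes "KL \<beta>" and "r \<ge> 0"
  shows "KLinv \<beta> \<tau> (\<beta> r \<tau>) = r"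
  unfolding KLinv_def
proof (rule the_equality)
  show "0 \<le> r \<and> \<beta> r \<tau> = \<beta> r \<tau>" using assms(2) by simp
  have "inj_on (\<lambda>s. \<beta> s \<tau>) {0..}"
    using assms(1) unfolding KL_def classK_def by (auto intro: strict_mono_on_imp_inj_on)
  then show "r' = r" if "0 \<le> r' \<and> \<beta> r' \<tau> = \<beta> r \<tau>" for r'
    using that assms(2) by (auto dest: inj_onD)
qed

lemma age_le: "age t i \<le> t"
  unfolding age_def iota_def by auto

lemma maxterm_cong:
  assumes "\<And>i. i \<in> {0..2*t} \<Longrightarrow> \<beta> (seqnorm t p i) (age t i) = \<gamma> (seqnorm t p i) (age t i)"
  shows "maxterm \<beta> t p = maxterm \<gamma> t p"
  unfolding maxterm_def using assms by (metis (no_types, lifting) image_cong)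

lemma rho_hyp_scaled: "rho_hyp \<alpha> (\<lambda>s \<tau>. \<alpha> (2 * s) \<tau>) P"
  unfolding rho_hyp_def by simp

lemma rho_hyp_linear_exponential:
  "rho_hyp (\<lambda>s \<tau>. c * s * b ^ \<tau>) (\<lambda>s \<tau>. (2 * c) * s * b ^ \<tau>) P"
  using rho_hyp_scaled[of "\<lambda>s \<tau>. c * s * b ^ \<tau>"] by (simp add: ac_simps)

lemma maxterm_max_rho_hyp:
  assumes "rho_hyp \<alpha> \<rho>l P" and "p \<in> P t"
  shows "maxterm (\<lambda>s \<tau>. max (\<rho>l s \<tau>) (\<alpha> (2 * s) \<tau>)) t p = maxterm \<rho>l t p"
proof (rule maxterm_cong)
  fix i assume "i \<in> {0..2*t}"
  then have "\<alpha> (2 * seqnorm t p i) (age t i) \<le> \<rho>l (seqnorm t p i) (age t i)"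
    using assms age_le unfolding rho_hyp_def by blast
  then show "max (\<rho>l (seqnorm t p i) (age t i)) (\<alpha> (2 * seqnorm t p i) (age t i))
      = \<rho>l (seqnorm t p i) (age t i)" by simp
qed

lemma cond_A3_self:
  assumes "KL \<rho>" and "\<And>s \<tau>. s \<ge> 0 \<Longrightarrow> \<alpha> (2 * s) \<tau> \<le> \<rho> s \<tau>"
  shows "cond_A3 \<alpha> P \<rho> \<rho>"
  unfolding cond_A3_def
proof (intro exI[of _ \<rho>] conjI assms(1) allI ballI impI)
  fix t p i \<tau> \<tau>'
  assume "\<rho> (seqnorm t p i) \<tau> \<in> (\<lambda>r. \<rho> r \<tau>') ` {0..}"
  then obtain r where r: "r \<ge> 0" "\<rho> (seqnorm t p i) \<tau> = \<rho> r \<tau>'" by auto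
  have "\<alpha> (2 * KLinv \<rho> \<tau>' (\<rho> r \<tau>')) \<tau>' = \<alpha> (2 * r) \<tau>'"
    using KLinv_apply[OF assms(1) r(1)] by simp
  also have "\<dots> \<le> \<rho> r \<tau>'" using assms(2) r(1) .
  finally show "\<alpha> (2 * KLinv \<rho> \<tau>' (\<rho> (seqnorm t p i) \<tau>)) \<tau>' \<le> \<rho> (seqnorm t p i) \<tau>"
    unfolding r(2) .
qed

lemma A2_A3_FIE_cost:
  assumes "KL \<alpha>" and "KL \<rho>l" and "rho_hyp \<alpha> \<rho>l P"
  shows "A2_A3 \<alpha> (FIE_cost \<rho>l) P"
proof -
  define \<rho> where "\<rho> = (\<lambda>s \<tau>. max (\<rho>l s \<tau>) (\<alpha> (2 * s) \<tau>))"
  have KL_\<rho>: "KL \<rho>"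
    unfolding \<rho>_def using KL_max[OF assms(2) KL_scale_arg[OF assms(1)]] by simp
  have "cond_A2 (FIE_cost \<rho>l) P \<rho> \<rho>"
    unfolding cond_A2_def FIE_cost_def \<rho>_def using maxterm_max_rho_hyp[OF assms(3)] by simp
  moreover have "cond_A3 \<alpha> P \<rho> \<rho>"
    using KL_\<rho> by (rule cond_A3_self) (simp add: \<rho>_def)
  ultimately show ?thesis unfolding A2_A3_def using KL_\<rho> by blast
qed

theorem lemma16:
  fixes X :: "'x::euclidean_space set" and W :: "'w::euclidean_space set"
    and V :: "'y::euclidean_space set"
    and f :: "'x \<Rightarrow> 'w \<Rightarrow> 'x" and h :: "'x \<Rightarrow> 'y"
    and \<alpha> :: "real \<Rightarrow> nat \<Rightarrow> real"
  assumes ioss: "iIOSS X W f h \<alpha>"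
  shows
    "(\<forall>\<delta>0 \<rho>l. \<delta>0 > 0 \<and> KL \<rho>l \<and> rho_hyp \<alpha> \<rho>l (Pi_delta X W V \<delta>0)
        \<longrightarrow> A2_A3 \<alpha> (FIE_cost \<rho>l) (Pi_delta X W V \<delta>0))
   \<and> (\<forall>\<rho>l. KL \<rho>l \<and> rho_hyp \<alpha> \<rho>l (Pi_set X W V)
        \<longrightarrow> A2_A3 \<alpha> (FIE_cost \<rho>l) (Pi_set X W V))
   \<and> (\<forall>\<delta>0 > 0. \<exists>\<rho>l. KL \<rho>l \<and> rho_hyp \<alpha> \<rho>l (Pi_delta X W V \<delta>0))
   \<and> (\<exists>\<rho>l. KL \<rho>l \<and> rho_hyp \<alpha> \<rho>l (Pi_set X W V))
   \<and> (\<forall>c lam. c > 0 \<and> 0 < lam \<and> lam < 1 \<and> iIOSS X W f h (\<lambda>s \<tau>. c * s * lam ^ \<tau>) \<longrightarrow>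
        (\<exists>c' b. c' > 0 \<and> 0 < b \<and> b < 1 \<and> KL (\<lambda>s \<tau>. c' * s * b ^ \<tau>)
           \<and> rho_hyp (\<lambda>s \<tau>. c * s * lam ^ \<tau>) (\<lambda>s \<tau>. c' * s * b ^ \<tau>) (Pi_set X W V)
           \<and> (\<forall>\<delta>0 > 0. rho_hyp (\<lambda>s \<tau>. c * s * lam ^ \<tau>) (\<lambda>s \<tau>. c' * s * b ^ \<tau>) (Pi_delta X W V \<delta>0))))"
proof -
  have KL_\<alpha>: "KL \<alpha>" using ioss unfolding iIOSS_def by simp
  have KL_scaled: "KL (\<lambda>s \<tau>. \<alpha> (2 * s) \<tau>)" using KL_scale_arg[OF KL_\<alpha>] by simp
  show ?thesis
  proof (intro conjI allI impI)
    fix c lam :: real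
    assume "c > 0 \<and> 0 < lam \<and> lam < 1 \<and> iIOSS X W f h (\<lambda>s \<tau>. c * s * lam ^ \<tau>)"
    then show "\<exists>c' b. c' > 0 \<and> 0 < b \<and> b < 1 \<and> KL (\<lambda>s \<tau>. c' * s * b ^ \<tau>)
        \<and> rho_hyp (\<lambda>s \<tau>. c * s * lam ^ \<tau>) (\<lambda>s \<tau>. c' * s * b ^ \<tau>) (Pi_set X W V)
        \<and> (\<forall>\<delta>0 > 0. rho_hyp (\<lambda>s \<tau>. c * s * lam ^ \<tau>) (\<lambda>s \<tau>. c' * s * b ^ \<tau>) (Pi_delta X W V \<delta>0))"
      using KL_linear_exponential[of "2 * c" lam] rho_hyp_linear_exponential
      by (intro exI[of _ "2 * c"] exI[of _ lam]) auto
  qed (use A2_A3_FIE_cost[OF KL_\<alpha>] KL_scaled rho_hyp_scaled in blast)+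
qed

end
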